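(* Let $A_1A_2A_3A_4$ be a (non-degenerate) tetrahedron in $\mathbb{R}^3$ with $A_1A_4+A_2A_3>A_1A_2+A_3A_4$. Let $F$ be a minimizer of $X\mapsto |A_1X|+|A_2X|+|A_3X|+|A_4X|$ lying in the interior of the tetrahedron, and let $T_{12}$, $T_{34}$ be the points where the line through $F$ meeting both lines $A_1A_2$ and $A_3A_4$ intersects these lines. Let $A_1''\in$ line $A_1A_2$, $A_4''\in$ line $A_3A_4$ be the endpoints of the common perpendicular of the two (skew) lines, $H=|A_1''A_4''|$, and assume $A_1''\notin[A_1,A_2]$ with $A_1$ between $A_1''$ and $A_2$, and $A_4''\notin[A_4,A_3]$ with $A_4$ between $A_4''$ and $A_3$. Let $\varphi$ be the angle between $\overrightarrow{A_1A_2}$ and $\overrightarrow{A_4A_3}$, $a_{12}=|A_1A_2|$, $a_{34}=|A_3A_4|$, $M_{12},M_{34}$ the midpoints of $A_1A_2$, $A_3A_4$, and put $t_{12}=|A_1''T_{12}|$, $t_{34}=|A_4''T_{34}|$, $k_1=|A_1''A_1|$, $k_2=|A_4''A_4|$, $m_{12}=|A_1''M_{12}|$, $m_{34}=|A_4''M_{34}|$, $\theta=\angle A_4FA_3$. Then $$\frac{t_{34}-t_{12}\cos\varphi}{\sqrt{H^2+t_{12}^2\sin^2\varphi}}=\frac{m_{34}-t_{34}}{\frac{a_{34}}{2}\tan\frac{\theta}{2}},\qquad \frac{t_{12}-t_{34}\cos\varphi}{\sqrt{H^2+t_{34}^2\sin^2\varphi}}=\frac{m_{12}-t_{12}}{\frac{a_{12}}{2}\tan\frac{\theta}{2}},$$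 and $$\cot\frac{\theta}{2}=\frac{H^2+k_1(t_{12}-t_{34}\cos\varphi)+k_2(t_{34}-t_{12}\cos\varphi)}{(t_{12}-k_1)\sqrt{H^2+t_{34}^2\sin^2\varphi}+(t_{34}-k_2)\sqrt{H^2+t_{12}^2\sin^2\varphi}}.$$
   Context: $|XY|$ denotes Euclidean distance and $\angle XYZ\in[0,\pi]$ the angle at $Y$. $F$ is the (unweighted) Fermat–Torricelli point of the four vertices; the line $T_{12}T_{34}$ through $F$ is called its Simpson line. *)

theory Defs
  imports "HOL-Analysis.Analysis"
begin

definition vec_angle :: "real^3 \<Rightarrow> real^3 \<Rightarrow> real" where
  "vec_angle u v = arccos (inner u v / (norm u * norm v))"

definition pt_angle :: "real^3 \<Rightarrow> real^3 \<Rightarrow> real^3 \<Rightarrow> real" where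
  "pt_angle X Y Z = vec_angle (X - Y) (Z - Y)"

end

theory Submission
  imports Defs
begin

(*
  At an interior Fermat point F the unit vectors u_i from F towards the vertices A_i sum to
  zero.  Hence the angles A1 F A2 and A3 F A4 are both equal to theta, and u3 + u4 = -(u1 + u2)
  bisects both of them.  By the angle bisector theorem the bisector meets the edges A1A2 and
  A3A4 in the points dividing them in the ratios r1 : r2 and r4 : r3, where r_i = |F A_i|.
  Since these two lines are skew, the bisector is the only line through F meeting both: it is
  the Simpson line, and T34 - T12 = kappa (u3 + u4) with an explicit kappa > 0.

  In the frame of the common perpendicular, t34 - t12 cos phi and sqrt (H^2 + t12^2 sin^2 phi)
  are the components of T34 - T12 along and across the line A3A4, and
  H^2 + k1 (t12 - t34 cos phi) + k2 (t34 - t12 cos phi) is its inner product with A4 - A1.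
  Computing the same quantities from T34 - T12 = kappa (u3 + u4) in the triangles F A3 A4 and
  F A1 A2 gives the identities; the second is the first one for the relabelled tetrahedron
  A4 A3 A2 A1.
*)

section \<open>Affine geometry of a tetrahedron\<close>

lemma not_coplanar_imp_distinct:
  assumes "\<not> coplanar {A1, A2, A3, A4}"
  shows "distinct [A1, A2, A3, A4]"
  using assms by (auto simp: insert_commute coplanar_3)

lemma not_coplanar_imp_affine_independent:
  assumes "\<not> coplanar {A1, A2, A3, A4}"
  shows "\<not> affine_dependent {A1, A2, A3, A4}"
proof
  let ?S = "{A1, A2, A3, A4}"
  assume "affine_dependent ?S"
  then obtain x where x: "x \<in> ?S" "x \<in> affine hull (?S - {x})"
    unfolding affine_dependent_def by blast
  obtain a b c where "?S - {x} \<subseteq> {a, b, c}"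
    using x(1) by blast
  have "?S \<subseteq> affine hull (?S - {x})"
    using x by (auto intro: hull_inc)
  also have "\<dots> \<subseteq> affine hull {a, b, c}"
    by (rule hull_mono) fact
  finally show False
    using assms by (auto simp: coplanar_def)
qed

lemma not_coplanar_affine_coeffs_unique:
  assumes nc: "\<not> coplanar {A1, A2, A3, A4}"
    and sums: "x1 + x2 + x3 + x4 = y1 + y2 + y3 + y4"
    and comb: "x1 *\<^sub>R A1 + x2 *\<^sub>R A2 + x3 *\<^sub>R A3 + x4 *\<^sub>R A4
             = y1 *\<^sub>R A1 + y2 *\<^sub>R A2 + y3 *\<^sub>R A3 + y4 *\<^sub>R A4"
  shows "x1 = y1 \<and> x2 = y2 \<and> x3 = y3 \<and> x4 = y4"
proof (rule ccontr)
  let ?S = "{A1, A2, A3, A4}"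
  assume ne: "\<not> ?thesis"
  have "distinct [A1, A2, A3, A4]"
    using nc by (rule not_coplanar_imp_distinct)
  define U where "U v = (if v = A1 then x1 - y1 else if v = A2 then x2 - y2
                         else if v = A3 then x3 - y3 else x4 - y4)" for v
  have U: "U A1 = x1 - y1" "U A2 = x2 - y2" "U A3 = x3 - y3" "U A4 = x4 - y4"
    using \<open>distinct [A1, A2, A3, A4]\<close> by (auto simp: U_def)
  have "sum U ?S = 0"
    using \<open>distinct [A1, A2, A3, A4]\<close> sums by (simp add: U)
  moreover have "(\<Sum>v\<in>?S. U v *\<^sub>R v) = 0"
    using \<open>distinct [A1, A2, A3, A4]\<close> comb by (simp add: U algebra_simps)
  moreover have "\<exists>v\<in>?S. U v \<noteq> 0"
    using ne by (auto simp: U)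
  ultimately have "affine_dependent ?S"
    by (auto simp: affine_dependent_explicit_finite)
  then show False
    using not_coplanar_imp_affine_independent[OF nc] by blast
qed

lemma not_coplanar_transversal_unique:
  assumes nc: "\<not> coplanar {A1, A2, A3, A4}"
    and Q: "Q \<in> affine hull {A1, A2}" and P: "P \<in> affine hull {A3, A4}"
    and F: "F = (1 - \<mu>) *\<^sub>R Q + \<mu> *\<^sub>R P" "0 < \<mu>" "\<mu> < 1"
    and X: "X \<in> affine hull {A1, A2}" and Y: "Y \<in> affine hull {A3, A4}"
    and collinear: "collinear {F, X, Y}"
  shows "X = Q \<and> Y = P"
proof -
  obtain q1 q2 where q: "Q = q1 *\<^sub>R A1 + q2 *\<^sub>R A2" "q1 + q2 = 1"
    using Q by (auto simp: affine_hull_2)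
  obtain p3 p4 where p: "P = p3 *\<^sub>R A3 + p4 *\<^sub>R A4" "p3 + p4 = 1"
    using P by (auto simp: affine_hull_2)
  obtain x1 x2 where x: "X = x1 *\<^sub>R A1 + x2 *\<^sub>R A2" "x1 + x2 = 1"
    using X by (auto simp: affine_hull_2)
  obtain y3 y4 where y: "Y = y3 *\<^sub>R A3 + y4 *\<^sub>R A4" "y3 + y4 = 1"
    using Y by (auto simp: affine_hull_2)
  have "X \<noteq> Y"
  proof
    assume "X = Y"
    then have "x1 *\<^sub>R A1 + x2 *\<^sub>R A2 + 0 *\<^sub>R A3 + 0 *\<^sub>R A4
             = 0 *\<^sub>R A1 + 0 *\<^sub>R A2 + y3 *\<^sub>R A3 + y4 *\<^sub>R A4"
      using x(1) y(1) by simp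
    moreover have "x1 + x2 + 0 + 0 = 0 + 0 + y3 + y4"
      using x(2) y(2) by simp
    ultimately have "x1 = 0 \<and> x2 = 0"
      using not_coplanar_affine_coeffs_unique[OF nc] by blast
    with x(2) show False
      by simp
  qed
  moreover have "collinear {X, Y, F}"
    using collinear by (simp add: insert_commute)
  ultimately obtain a b where ab: "F = a *\<^sub>R X + b *\<^sub>R Y" "a + b = 1"
    by (auto simp: collinear_3_affine_hull affine_hull_2)
  have "a * x1 + a * x2 + b * y3 + b * y4 = a * (x1 + x2) + b * (y3 + y4)"
    by (simp add: distrib_left)
  also have "\<dots> = (1 - \<mu>) * (q1 + q2) + \<mu> * (p3 + p4)"
    using ab(2) x(2) y(2) q(2) p(2) by simp
  also have "\<dots> = (1 - \<mu>) * q1 + (1 - \<mu>) * q2 + \<mu> * p3 + \<mu> * p4"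
    by (simp add: distrib_left)
  finally have sums: "a * x1 + a * x2 + b * y3 + b * y4
      = (1 - \<mu>) * q1 + (1 - \<mu>) * q2 + \<mu> * p3 + \<mu> * p4" .
  have "(a * x1) *\<^sub>R A1 + (a * x2) *\<^sub>R A2 + (b * y3) *\<^sub>R A3 + (b * y4) *\<^sub>R A4
      = ((1 - \<mu>) * q1) *\<^sub>R A1 + ((1 - \<mu>) * q2) *\<^sub>R A2 + (\<mu> * p3) *\<^sub>R A3 + (\<mu> * p4) *\<^sub>R A4"
    using ab(1) F(1) x(1) y(1) q(1) p(1) by (simp add: algebra_simps)
  then have coeffs: "a * x1 = (1 - \<mu>) * q1" "a * x2 = (1 - \<mu>) * q2"
      "b * y3 = \<mu> * p3" "b * y4 = \<mu> * p4"
    using not_coplanar_affine_coeffs_unique[OF nc sums] by simp_all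
  have "a = 1 - \<mu>"
    using coeffs(1,2) x(2) q(2) by (metis distrib_left mult.right_neutral)
  moreover have "b = \<mu>"
    using coeffs(3,4) y(2) p(2) by (metis distrib_left mult.right_neutral)
  ultimately have "x1 = q1 \<and> x2 = q2 \<and> y3 = p3 \<and> y4 = p4"
    using coeffs F(2,3) by auto
  then show ?thesis
    using x(1) y(1) q(1) p(1) by simp
qed

section \<open>Minimising a sum of distances\<close>

lemma has_derivative_dist_right:
  fixes a x :: "'a::real_inner"
  assumes "x \<noteq> a"
  shows "((\<lambda>X. dist a X) has_derivative (\<lambda>h. h \<bullet> sgn (x - a))) (at x)"
proof -
  have "((\<lambda>X. norm (X - a)) has_derivative (\<lambda>h. h \<bullet> sgn (x - a))) (at x)"
    using has_derivative_compose[OF has_derivative_diff[OF has_derivative_ident has_derivative_const]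
        has_derivative_norm[of "x - a"]] assms by simp
  then show ?thesis
    by (simp add: dist_commute dist_norm)
qed

lemma sum_dist_minimum_imp_sum_sgn_eq_0:
  fixes S :: "'a::real_inner set"
  assumes "finite S" "F \<notin> S" and min: "\<And>X. (\<Sum>A\<in>S. dist A F) \<le> (\<Sum>A\<in>S. dist A X)"
  shows "(\<Sum>A\<in>S. sgn (A - F)) = 0"
proof -
  define s where "s = (\<Sum>A\<in>S. sgn (F - A))"
  have "((\<lambda>X. \<Sum>A\<in>S. dist A X) has_derivative (\<lambda>h. \<Sum>A\<in>S. h \<bullet> sgn (F - A))) (at F)"
    using assms(2) by (intro has_derivative_sum has_derivative_dist_right) auto
  then have "((\<lambda>X. \<Sum>A\<in>S. dist A X) has_derivative (\<lambda>h. h \<bullet> s)) (at F)"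
    by (simp add: s_def inner_sum_right)
  then have "(\<lambda>h. h \<bullet> s) = (\<lambda>h. 0)"
    using min by (intro has_derivative_local_min always_eventually) auto
  then have "s = 0"
    by (metis inner_eq_zero_iff)
  moreover have "(\<Sum>A\<in>S. sgn (A - F)) = - s"
    by (simp add: s_def flip: sum_negf sgn_minus)
  ultimately show ?thesis
    by simp
qed

lemma unit_sum_eq_0_imp_inner_eq:
  fixes u1 u2 u3 u4 :: "'a::real_inner"
  assumes "norm u1 = 1" "norm u2 = 1" "norm u3 = 1" "norm u4 = 1"
    and "u1 + u2 + u3 + u4 = 0"
  shows "u1 \<bullet> u2 = u3 \<bullet> u4"
proof -
  have "u1 + u2 = - (u3 + u4)"
    using assms(5) by (simp only: eq_neg_iff_add_eq_0 add.assoc)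
  then have "(norm (u1 + u2))\<^sup>2 = (norm (u3 + u4))\<^sup>2"
    by (metis norm_minus_cancel)
  moreover have "u1 \<bullet> u1 = 1" "u2 \<bullet> u2 = 1" "u3 \<bullet> u3 = 1" "u4 \<bullet> u4 = 1"
    using assms(1-4) by (simp_all add: power2_norm_eq_inner[symmetric])
  ultimately show ?thesis
    by (simp add: power2_norm_eq_inner inner_add inner_commute)
qed

section \<open>Vector identities and angles\<close>

lemma angle_bisector_point:
  fixes F u w :: "'a::real_vector"
  assumes "A = F + r *\<^sub>R u" "B = F + s *\<^sub>R w" "r + s \<noteq> 0"
  shows "A + (r / (r + s)) *\<^sub>R (B - A) = F + (r * s / (r + s)) *\<^sub>R (u + w)"
proof -
  have "A + (r / (r + s)) *\<^sub>R (B - A) = F + (r - r * (r / (r + s))) *\<^sub>R u + (r / (r + s) * s) *\<^sub>R w"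
    using assms(1,2) by (simp add: algebra_simps)
  also have "r - r * (r / (r + s)) = r * s / (r + s)"
    using assms(3) by (simp add: field_simps)
  also have "r / (r + s) * s = r * s / (r + s)"
    by simp
  finally show ?thesis
    by (simp add: scaleR_add_right)
qed

lemma bisector_inner_side:
  fixes u w :: "'a::real_inner"
  assumes "norm u = 1" "norm w = 1"
  shows "(u + w) \<bullet> (r *\<^sub>R u - s *\<^sub>R w) = (r - s) * (1 + u \<bullet> w)"
    and "(norm (u + w))\<^sup>2 * (norm (r *\<^sub>R u - s *\<^sub>R w))\<^sup>2 - ((u + w) \<bullet> (r *\<^sub>R u - s *\<^sub>R w))\<^sup>2
         = (r + s)\<^sup>2 * (1 - (u \<bullet> w)\<^sup>2)"
proof -
  have uu: "u \<bullet> u = 1" "w \<bullet> w = 1"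
    using assms by (simp_all add: power2_norm_eq_inner[symmetric])
  show bd: "(u + w) \<bullet> (r *\<^sub>R u - s *\<^sub>R w) = (r - s) * (1 + u \<bullet> w)"
    by (simp add: inner_add_left inner_diff_right uu inner_commute algebra_simps)
  have nb: "(norm (u + w))\<^sup>2 = 2 * (1 + u \<bullet> w)"
    by (simp add: power2_norm_eq_inner inner_add_left inner_add_right uu inner_commute)
  have nd: "(norm (r *\<^sub>R u - s *\<^sub>R w))\<^sup>2 = r\<^sup>2 + s\<^sup>2 - 2 * r * s * (u \<bullet> w)"
    by (simp only: power2_norm_eq_inner)
      (simp add: inner_diff_left inner_diff_right uu inner_commute[of w u] power2_eq_square
        algebra_simps)
  show "(norm (u + w))\<^sup>2 * (norm (r *\<^sub>R u - s *\<^sub>R w))\<^sup>2 - ((u + w) \<bullet> (r *\<^sub>R u - s *\<^sub>R w))\<^sup>2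
         = (r + s)\<^sup>2 * (1 - (u \<bullet> w)\<^sup>2)"
    unfolding bd nb nd by (simp add: power2_eq_square algebra_simps)
qed

lemma perpendicular_frame_inner:
  fixes e d h :: "'a::real_inner" and x y :: real
  assumes "norm e = 1" "norm d = 1" "h \<bullet> e = 0" "h \<bullet> d = 0"
  defines "v \<equiv> h + y *\<^sub>R d - x *\<^sub>R e"
  shows "v \<bullet> d = y - x * (e \<bullet> d)"
    and "v \<bullet> e = y * (e \<bullet> d) - x"
    and "v \<bullet> h = (norm h)\<^sup>2"
    and "(norm v)\<^sup>2 - (v \<bullet> d)\<^sup>2 = (norm h)\<^sup>2 + x\<^sup>2 * (1 - (e \<bullet> d)\<^sup>2)"
proof -
  have unit: "e \<bullet> e = 1" "d \<bullet> d = 1"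
    using assms(1,2) by (simp_all add: power2_norm_eq_inner[symmetric])
  have perp: "e \<bullet> h = 0" "d \<bullet> h = 0"
    using assms(3,4) by (simp_all add: inner_commute)
  show vd: "v \<bullet> d = y - x * (e \<bullet> d)" and ve: "v \<bullet> e = y * (e \<bullet> d) - x"
    and vh: "v \<bullet> h = (norm h)\<^sup>2"
    by (simp_all add: v_def inner_add_left inner_diff_left unit perp assms(3,4)
        inner_commute[of d e] power2_norm_eq_inner)
  have "(norm v)\<^sup>2 = v \<bullet> (h + y *\<^sub>R d - x *\<^sub>R e)"
    by (simp add: power2_norm_eq_inner v_def[symmetric])
  also have "\<dots> = v \<bullet> h + y * (v \<bullet> d) - x * (v \<bullet> e)"
    by (simp add: inner_add_right inner_diff_right)
  finally show "(norm v)\<^sup>2 - (v \<bullet> d)\<^sup>2 = (norm h)\<^sup>2 + x\<^sup>2 * (1 - (e \<bullet> d)\<^sup>2)"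
    unfolding vd ve vh by (simp add: power2_eq_square algebra_simps)
qed

lemma closed_segment_ray_point:
  fixes Z A B :: "'a::real_normed_vector"
  assumes "A \<in> closed_segment Z B" "A \<noteq> B" "0 \<le> \<tau>"
  shows "A + \<tau> *\<^sub>R (B - A) = Z + (dist Z A + \<tau> * dist A B) *\<^sub>R sgn (B - A)"
proof -
  obtain w where w: "0 \<le> w" "w \<le> 1" "A = (1 - w) *\<^sub>R Z + w *\<^sub>R B"
    using assms(1) by (auto simp: in_segment)
  have "w \<noteq> 1"
    using w assms(2) by auto
  define c where "c = w / (1 - w)"
  have "0 \<le> c"
    using w \<open>w \<noteq> 1\<close> by (simp add: c_def)
  have "A - Z = w *\<^sub>R (B - Z)" "B - A = (1 - w) *\<^sub>R (B - Z)"
    using w(3) by (simp_all add: algebra_simps)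
  then have AZ: "A - Z = c *\<^sub>R (B - A)"
    using \<open>w \<noteq> 1\<close> by (simp add: c_def)
  then have "dist Z A = c * dist A B"
    using \<open>0 \<le> c\<close> by (simp add: dist_norm norm_minus_commute[of Z A] norm_minus_commute[of A B])
  have BA: "B - A = dist A B *\<^sub>R sgn (B - A)"
    using assms(2) by (simp add: dist_norm norm_minus_commute[of A B] sgn_div_norm)
  have "A + \<tau> *\<^sub>R (B - A) = Z + (c + \<tau>) *\<^sub>R (B - A)"
    using AZ by (simp add: algebra_simps)
  also have "\<dots> = Z + ((c + \<tau>) * dist A B) *\<^sub>R sgn (B - A)"
    by (simp only: scaleR_scaleR[symmetric] BA[symmetric])
  also have "(c + \<tau>) * dist A B = dist Z A + \<tau> * dist A B"
    using \<open>dist Z A = c * dist A B\<close> by (simp add: algebra_simps)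
  finally show ?thesis .
qed

lemma closed_segment_ray_point_dist:
  fixes Z A B :: "'a::real_normed_vector"
  assumes "A \<in> closed_segment Z B" "A \<noteq> B" "0 \<le> \<tau>"
  shows "dist Z (A + \<tau> *\<^sub>R (B - A)) = dist Z A + \<tau> * dist A B"
  using closed_segment_ray_point[OF assms] assms(2,3)
  by (simp add: dist_norm norm_sgn)

lemma vec_angle_sgn: "vec_angle u v = arccos (sgn u \<bullet> sgn v)"
  by (simp add: vec_angle_def sgn_div_norm field_simps)

lemma vec_angle_commute: "vec_angle u v = vec_angle v u"
  by (simp add: vec_angle_sgn inner_commute)

lemma abs_inner_sgn_le_1: "\<bar>sgn u \<bullet> sgn v\<bar> \<le> 1"
  using Cauchy_Schwarz_ineq2[of "sgn u" "sgn v"] by (auto simp: norm_sgn split: if_splits)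

lemma cos_vec_angle: "cos (vec_angle u v) = sgn u \<bullet> sgn v"
  using abs_inner_sgn_le_1[of u v] by (simp add: vec_angle_sgn)

lemma sin_vec_angle_nonneg: "0 \<le> sin (vec_angle u v)"
  using abs_inner_sgn_le_1[of u v] by (simp add: vec_angle_sgn sin_arccos abs_square_le_1)

(* Valid also where sin x = 0, thanks to the convention x / 0 = 0. *)
lemma cot_half: "cot (x / 2) = (1 + cos x) / sin x"
  using tan_half[of "x / 2"] by (simp add: cot_altdef add.commute)

section \<open>The Fermat point and its Simpson line\<close>

locale fermat_tetrahedron =
  fixes A1 A2 A3 A4 F :: "real^3"
  assumes not_coplanar: "\<not> coplanar {A1, A2, A3, A4}"
    and minimal: "\<forall>X. dist A1 F + dist A2 F + dist A3 F + dist A4 F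
                   \<le> dist A1 X + dist A2 X + dist A3 X + dist A4 X"
    and F_interior: "F \<in> interior (convex hull {A1, A2, A3, A4})"
begin

definition r :: "real^3 \<Rightarrow> real" where "r A = dist A F"

definition u :: "real^3 \<Rightarrow> real^3" where "u A = sgn (A - F)"

definition \<kappa> :: real
  where "\<kappa> = r A1 * r A2 / (r A1 + r A2) + r A4 * r A3 / (r A4 + r A3)"

abbreviation \<theta> :: real where "\<theta> \<equiv> pt_angle A4 F A3"

lemma distinct_vertices: "distinct [A1, A2, A3, A4]"
  using not_coplanar by (rule not_coplanar_imp_distinct)

lemma F_not_vertex: "F \<notin> {A1, A2, A3, A4}"
  using F_interior extreme_point_not_in_interior extreme_point_of_convex_hull_affine_independent
    not_coplanar_imp_affine_independent[OF not_coplanar]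
  by blast

lemma r_pos: "0 < r A1" "0 < r A2" "0 < r A3" "0 < r A4"
  using F_not_vertex by (auto simp: r_def)

lemma norm_u: "norm (u A1) = 1" "norm (u A2) = 1" "norm (u A3) = 1" "norm (u A4) = 1"
  using F_not_vertex by (auto simp: u_def norm_sgn)

lemma vertex_eq: "A = F + r A *\<^sub>R u A"
  by (cases "A = F") (simp_all add: r_def u_def dist_norm sgn_div_norm)

lemma vertex_diff: "A - B = r A *\<^sub>R u A - r B *\<^sub>R u B"
proof -
  have "A - B = (F + r A *\<^sub>R u A) - (F + r B *\<^sub>R u B)"
    by (simp only: vertex_eq[symmetric])
  then show ?thesis
    by simp
qed

lemma kappa_pos: "0 < \<kappa>"
  using r_pos by (simp add: \<kappa>_def add_pos_pos)

lemma u_sum: "u A1 + u A2 + u A3 + u A4 = 0"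
proof -
  have "(\<Sum>A\<in>{A1, A2, A3, A4}. sgn (A - F)) = 0"
    using minimal F_not_vertex distinct_vertices
    by (intro sum_dist_minimum_imp_sum_sgn_eq_0) (auto simp: add.assoc)
  then show ?thesis
    using distinct_vertices by (simp add: u_def add.assoc)
qed

lemma inner_u_opposite: "u A1 \<bullet> u A2 = u A3 \<bullet> u A4"
  using u_sum by (intro unit_sum_eq_0_imp_inner_eq) (simp_all add: norm_u)

lemma cos_theta: "cos \<theta> = u A3 \<bullet> u A4"
  by (simp add: pt_angle_def cos_vec_angle u_def inner_commute)

lemma sin_theta_nonneg: "0 \<le> sin \<theta>"
  by (simp add: pt_angle_def sin_vec_angle_nonneg)

lemma inner_bisector_u:
  "(u A3 + u A4) \<bullet> u A1 = - (1 + cos \<theta>)"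
  "(u A3 + u A4) \<bullet> u A4 = 1 + cos \<theta>"
proof -
  have "u A3 + u A4 = - (u A1 + u A2)"
    using u_sum by (simp add: eq_neg_iff_add_eq_0 algebra_simps)
  then have "(u A3 + u A4) \<bullet> u A1 = - (u A1 \<bullet> u A1 + u A1 \<bullet> u A2)"
    by (simp add: inner_add_left inner_diff_right inner_commute)
  then show "(u A3 + u A4) \<bullet> u A1 = - (1 + cos \<theta>)"
    using norm_u(1) by (simp add: norm_eq_1 inner_u_opposite cos_theta)
  show "(u A3 + u A4) \<bullet> u A4 = 1 + cos \<theta>"
    using norm_u(4) by (simp add: inner_add_left cos_theta norm_eq_1)
qed

lemma opposite_angle_eq: "pt_angle A1 F A2 = \<theta>"
  using inner_u_opposite by (simp add: pt_angle_def vec_angle_sgn u_def inner_commute)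

lemma bisector_feet:
  "A1 + (r A1 / (r A1 + r A2)) *\<^sub>R (A2 - A1)
     = F - (r A1 * r A2 / (r A1 + r A2)) *\<^sub>R (u A3 + u A4)"
  "A4 + (r A4 / (r A4 + r A3)) *\<^sub>R (A3 - A4)
     = F + (r A4 * r A3 / (r A4 + r A3)) *\<^sub>R (u A3 + u A4)"
proof -
  have "A1 + (r A1 / (r A1 + r A2)) *\<^sub>R (A2 - A1)
     = F + (r A1 * r A2 / (r A1 + r A2)) *\<^sub>R (u A1 + u A2)"
    using r_pos by (intro angle_bisector_point vertex_eq) simp
  moreover have "u A1 + u A2 = - (u A3 + u A4)"
    using u_sum by (simp only: eq_neg_iff_add_eq_0 add.assoc)
  ultimately show "A1 + (r A1 / (r A1 + r A2)) *\<^sub>R (A2 - A1)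
     = F - (r A1 * r A2 / (r A1 + r A2)) *\<^sub>R (u A3 + u A4)"
    by (simp only: scaleR_minus_right diff_conv_add_uminus)
  show "A4 + (r A4 / (r A4 + r A3)) *\<^sub>R (A3 - A4)
     = F + (r A4 * r A3 / (r A4 + r A3)) *\<^sub>R (u A3 + u A4)"
    using r_pos by (subst add.commute[of "u A3"]) (intro angle_bisector_point vertex_eq, simp)
qed

end

locale fermat_simpson_line = fermat_tetrahedron +
  fixes T12 T34 A1'' A4'' :: "real^3"
  assumes T12: "T12 \<in> affine hull {A1, A2}" and T34: "T34 \<in> affine hull {A3, A4}"
    and simpson_collinear: "collinear {F, T12, T34}"
    and perp12: "(A4'' - A1'') \<bullet> (A2 - A1) = 0" and perp34: "(A4'' - A1'') \<bullet> (A3 - A4) = 0"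
    and A1_between: "A1 \<in> closed_segment A1'' A2" and A4_between: "A4 \<in> closed_segment A4'' A3"
begin

lemma simpson_points:
  "T12 = A1 + (r A1 / (r A1 + r A2)) *\<^sub>R (A2 - A1)"
  "T34 = A4 + (r A4 / (r A4 + r A3)) *\<^sub>R (A3 - A4)"
proof -
  define \<rho>12 where "\<rho>12 = r A1 * r A2 / (r A1 + r A2)"
  define \<rho>34 where "\<rho>34 = r A4 * r A3 / (r A4 + r A3)"
  define \<mu> where "\<mu> = \<rho>12 / (\<rho>12 + \<rho>34)"
  have \<rho>: "0 < \<rho>12" "0 < \<rho>34"
    using r_pos by (simp_all add: \<rho>12_def \<rho>34_def)
  then have \<mu>: "0 < \<mu>" "\<mu> < 1"
    by (simp_all add: \<mu>_def)
  have "(1 - \<mu>) *\<^sub>R (F - \<rho>12 *\<^sub>R (u A3 + u A4)) + \<mu> *\<^sub>R (F + \<rho>34 *\<^sub>R (u A3 + u A4))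
      = F + (\<mu> * \<rho>34 - (1 - \<mu>) * \<rho>12) *\<^sub>R (u A3 + u A4)"
    by (simp add: algebra_simps)
  also have "\<mu> * \<rho>34 - (1 - \<mu>) * \<rho>12 = 0"
    using \<rho> by (simp add: \<mu>_def field_simps)
  finally have F_between: "F = (1 - \<mu>) *\<^sub>R (A1 + (r A1 / (r A1 + r A2)) *\<^sub>R (A2 - A1))
      + \<mu> *\<^sub>R (A4 + (r A4 / (r A4 + r A3)) *\<^sub>R (A3 - A4))"
    by (simp add: bisector_feet \<rho>12_def \<rho>34_def)
  have "A1 + (r A1 / (r A1 + r A2)) *\<^sub>R (A2 - A1) \<in> affine hull {A1, A2}"
    by (auto simp: affine_hull_2_alt)
  moreover have "A4 + (r A4 / (r A4 + r A3)) *\<^sub>R (A3 - A4) \<in> affine hull {A3, A4}"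
    using affine_hull_2_alt[of A4 A3] by (auto simp: insert_commute)
  ultimately show "T12 = A1 + (r A1 / (r A1 + r A2)) *\<^sub>R (A2 - A1)"
    "T34 = A4 + (r A4 / (r A4 + r A3)) *\<^sub>R (A3 - A4)"
    using not_coplanar_transversal_unique[OF not_coplanar _ _ F_between \<mu> T12 T34 simpson_collinear]
    by blast+
qed

lemma simpson_direction: "T34 - T12 = \<kappa> *\<^sub>R (u A3 + u A4)"
proof -
  have "T34 - T12 = (r A4 * r A3 / (r A4 + r A3) + r A1 * r A2 / (r A1 + r A2)) *\<^sub>R (u A3 + u A4)"
    unfolding simpson_points bisector_feet by (simp add: algebra_simps)
  then show ?thesis
    by (simp add: \<kappa>_def add.commute)
qed

lemma simpson_direction_inner:
  "(T34 - T12) \<bullet> sgn (A3 - A4) = \<kappa> * (r A3 - r A4) * (1 + cos \<theta>) / dist A3 A4"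
  "(norm (T34 - T12))\<^sup>2 - ((T34 - T12) \<bullet> sgn (A3 - A4))\<^sup>2
     = (\<kappa> * (r A3 + r A4) * sin \<theta> / dist A3 A4)\<^sup>2"
  "(T34 - T12) \<bullet> (A4 - A1) = \<kappa> * (r A1 + r A4) * (1 + cos \<theta>)"
proof -
  let ?b = "u A3 + u A4"
  have a: "dist A3 A4 = norm (A3 - A4)" "0 < dist A3 A4"
    using distinct_vertices by (auto simp: dist_norm)
  have sgn_d: "sgn (A3 - A4) = (1 / dist A3 A4) *\<^sub>R (A3 - A4)"
    by (simp add: a(1) sgn_div_norm divide_inverse_commute)
  note bisector = bisector_inner_side[OF norm_u(3) norm_u(4), of "r A3" "r A4", folded vertex_diff]
  have c: "u A3 \<bullet> u A4 = cos \<theta>"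
    by (simp add: cos_theta)
  show "(T34 - T12) \<bullet> sgn (A3 - A4) = \<kappa> * (r A3 - r A4) * (1 + cos \<theta>) / dist A3 A4"
    unfolding simpson_direction sgn_d using bisector(1) by (simp add: c)
  have gram: "(norm ?b)\<^sup>2 * (dist A3 A4)\<^sup>2 - (?b \<bullet> (A3 - A4))\<^sup>2
      = (r A3 + r A4)\<^sup>2 * (1 - (cos \<theta>)\<^sup>2)"
    using bisector(2) by (simp add: a(1) c)
  have inner_d: "(T34 - T12) \<bullet> sgn (A3 - A4) = \<kappa> * (?b \<bullet> (A3 - A4)) / dist A3 A4"
    by (simp add: simpson_direction sgn_d)
  have norm_v: "(norm (T34 - T12))\<^sup>2 = \<kappa>\<^sup>2 * (norm ?b)\<^sup>2"
    by (simp add: simpson_direction power_mult_distrib)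
  have "(norm (T34 - T12))\<^sup>2 - ((T34 - T12) \<bullet> sgn (A3 - A4))\<^sup>2
      = \<kappa>\<^sup>2 * ((norm ?b)\<^sup>2 * (dist A3 A4)\<^sup>2 - (?b \<bullet> (A3 - A4))\<^sup>2) / (dist A3 A4)\<^sup>2"
    unfolding inner_d norm_v using a(2) by (simp add: power_divide power_mult_distrib field_simps)
  also have "\<dots> = (\<kappa> * (r A3 + r A4) * sin \<theta> / dist A3 A4)\<^sup>2"
    unfolding gram by (simp add: sin_squared_eq power_mult_distrib power_divide)
  finally show "(norm (T34 - T12))\<^sup>2 - ((T34 - T12) \<bullet> sgn (A3 - A4))\<^sup>2
     = (\<kappa> * (r A3 + r A4) * sin \<theta> / dist A3 A4)\<^sup>2" .
  have "(T34 - T12) \<bullet> (A4 - A1) = \<kappa> * (r A4 * (?b \<bullet> u A4) - r A1 * (?b \<bullet> u A1))"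
    unfolding simpson_direction vertex_diff[of A4 A1]
    by (simp add: inner_diff_right right_diff_distrib mult.left_commute)
  then show "(T34 - T12) \<bullet> (A4 - A1) = \<kappa> * (r A1 + r A4) * (1 + cos \<theta>)"
    unfolding inner_bisector_u by (simp add: algebra_simps)
qed

lemma ray_A4_A3:
  assumes "0 \<le> \<tau>"
  shows "A4 + \<tau> *\<^sub>R (A3 - A4) = A4'' + dist A4'' (A4 + \<tau> *\<^sub>R (A3 - A4)) *\<^sub>R sgn (A3 - A4)"
    and "dist A4'' (A4 + \<tau> *\<^sub>R (A3 - A4)) = dist A4'' A4 + \<tau> * dist A4 A3"
proof -
  have "A4 \<noteq> A3"
    using distinct_vertices by auto
  then show "dist A4'' (A4 + \<tau> *\<^sub>R (A3 - A4)) = dist A4'' A4 + \<tau> * dist A4 A3"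
    using closed_segment_ray_point_dist[OF A4_between _ assms] by simp
  then show "A4 + \<tau> *\<^sub>R (A3 - A4) = A4'' + dist A4'' (A4 + \<tau> *\<^sub>R (A3 - A4)) *\<^sub>R sgn (A3 - A4)"
    using closed_segment_ray_point[OF A4_between \<open>A4 \<noteq> A3\<close> assms] by simp
qed

lemma T34_ray: "T34 = A4'' + dist A4'' T34 *\<^sub>R sgn (A3 - A4)"
  using ray_A4_A3(1)[of "r A4 / (r A4 + r A3)"] r_pos by (simp add: simpson_points(2)[symmetric])

lemma A4_ray: "A4 = A4'' + dist A4'' A4 *\<^sub>R sgn (A3 - A4)"
  using ray_A4_A3(1)[of 0] by simp

lemma dist_T34: "dist A4'' T34 = dist A4'' A4 + r A4 / (r A3 + r A4) * dist A3 A4"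
  using ray_A4_A3(2)[of "r A4 / (r A4 + r A3)", folded simpson_points(2)] r_pos
  by (simp add: dist_commute[of A4 A3] add.commute)

lemma dist_midpoint34: "dist A4'' (midpoint A3 A4) = dist A4'' A4 + dist A3 A4 / 2"
proof -
  have "midpoint A3 A4 = A4 + (1 / 2) *\<^sub>R (A3 - A4)"
    by (simp add: midpoint_def vec_eq_iff field_simps)
  then show ?thesis
    using ray_A4_A3(2)[of "1 / 2"] by (simp add: dist_commute[of A4 A3])
qed

end

(* Relabelling A1 A2 A3 A4 as A4 A3 A2 A1 exchanges the roles of the two edges, so every
   statement about the edge A3A4 below also yields its counterpart for A1A2. *)
sublocale fermat_simpson_line \<subseteq> mirror: fermat_simpson_line A4 A3 A2 A1 F T34 T12 A4'' A1''
proof unfold_locales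
  show "\<not> coplanar {A4, A3, A2, A1}"
    using not_coplanar by (simp add: insert_commute)
  show "\<forall>X. dist A4 F + dist A3 F + dist A2 F + dist A1 F
          \<le> dist A4 X + dist A3 X + dist A2 X + dist A1 X"
    using minimal by (simp add: ac_simps)
  show "F \<in> interior (convex hull {A4, A3, A2, A1})"
    using F_interior by (simp add: insert_commute)
  show "T34 \<in> affine hull {A4, A3}" "T12 \<in> affine hull {A2, A1}"
    using T12 T34 by (simp_all add: insert_commute)
  show "collinear {F, T34, T12}"
    using simpson_collinear by (simp add: insert_commute)
  show "(A1'' - A4'') \<bullet> (A3 - A4) = 0" "(A1'' - A4'') \<bullet> (A2 - A1) = 0"
    using perp12 perp34 by (simp_all add: inner_diff_left)
  show "A4 \<in> closed_segment A4'' A3" "A1 \<in> closed_segment A1'' A2"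
    by (fact A4_between A1_between)+
qed

context fermat_simpson_line
begin

lemma mirror_kappa: "mirror.\<kappa> = \<kappa>"
  by (simp add: mirror.\<kappa>_def \<kappa>_def)

abbreviation \<phi> :: real where "\<phi> \<equiv> vec_angle (A2 - A1) (A3 - A4)"

lemma simpson_frame:
  "(T34 - T12) \<bullet> sgn (A3 - A4) = dist A4'' T34 - dist A1'' T12 * cos \<phi>"
  "(norm (T34 - T12))\<^sup>2 - ((T34 - T12) \<bullet> sgn (A3 - A4))\<^sup>2
     = (dist A1'' A4'')\<^sup>2 + (dist A1'' T12)\<^sup>2 * (sin \<phi>)\<^sup>2"
  "(T34 - T12) \<bullet> (A4 - A1) = (dist A1'' A4'')\<^sup>2
     + dist A1'' A1 * (dist A1'' T12 - dist A4'' T34 * cos \<phi>)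
     + dist A4'' A4 * (dist A4'' T34 - dist A1'' T12 * cos \<phi>)"
proof -
  let ?e = "sgn (A2 - A1)" and ?d = "sgn (A3 - A4)" and ?h = "A4'' - A1''"
  have unit: "norm ?e = 1" "norm ?d = 1"
    using distinct_vertices by (auto simp: norm_sgn)
  have perp: "?h \<bullet> ?e = 0" "?h \<bullet> ?d = 0"
    using perp12 perp34 by (simp_all add: sgn_div_norm)
  have cos: "?e \<bullet> ?d = cos \<phi>"
    by (simp add: cos_vec_angle)
  have H: "norm ?h = dist A1'' A4''"
    by (simp add: dist_norm norm_minus_commute)
  have v: "T34 - T12 = ?h + dist A4'' T34 *\<^sub>R ?d - dist A1'' T12 *\<^sub>R ?e"
    using T34_ray mirror.T34_ray by (simp add: algebra_simps)
  have w: "A4 - A1 = ?h + dist A4'' A4 *\<^sub>R ?d - dist A1'' A1 *\<^sub>R ?e"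
    using A4_ray mirror.A4_ray by (simp add: algebra_simps)
  note frame = perpendicular_frame_inner[OF unit perp, of "dist A4'' T34" "dist A1'' T12"]
  show "(T34 - T12) \<bullet> sgn (A3 - A4) = dist A4'' T34 - dist A1'' T12 * cos \<phi>"
    unfolding v frame(1) cos ..
  show "(norm (T34 - T12))\<^sup>2 - ((T34 - T12) \<bullet> sgn (A3 - A4))\<^sup>2
     = (dist A1'' A4'')\<^sup>2 + (dist A1'' T12)\<^sup>2 * (sin \<phi>)\<^sup>2"
    unfolding v frame(4) cos H sin_squared_eq ..
  show "(T34 - T12) \<bullet> (A4 - A1) = (dist A1'' A4'')\<^sup>2
     + dist A1'' A1 * (dist A1'' T12 - dist A4'' T34 * cos \<phi>)
     + dist A4'' A4 * (dist A4'' T34 - dist A1'' T12 * cos \<phi>)"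
  proof -
    have "(T34 - T12) \<bullet> (A4 - A1) = (T34 - T12) \<bullet> ?h
        + dist A4'' A4 * ((T34 - T12) \<bullet> ?d) - dist A1'' A1 * ((T34 - T12) \<bullet> ?e)"
      unfolding w by (simp add: inner_add_right inner_diff_right algebra_simps)
    then show ?thesis
      unfolding v frame(1-3) cos H by (simp add: algebra_simps)
  qed
qed

lemma simpson_transverse:
  "sqrt ((dist A1'' A4'')\<^sup>2 + (dist A1'' T12)\<^sup>2 * (sin \<phi>)\<^sup>2)
     = \<kappa> * (r A3 + r A4) * sin \<theta> / dist A3 A4"
proof -
  have "0 \<le> \<kappa> * (r A3 + r A4) * sin \<theta>" "A3 \<noteq> A4"
    using kappa_pos r_pos sin_theta_nonneg distinct_vertices by simp_all
  moreover have "(dist A1'' A4'')\<^sup>2 + (dist A1'' T12)\<^sup>2 * (sin \<phi>)\<^sup>2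
      = (\<kappa> * (r A3 + r A4) * sin \<theta> / dist A3 A4)\<^sup>2"
    using simpson_direction_inner(2) unfolding simpson_frame(2) .
  ultimately show ?thesis
    by (simp add: abs_of_nonneg)
qed

lemma bisector_side_formula:
  "(dist A4'' T34 - dist A1'' T12 * cos \<phi>)
       / sqrt ((dist A1'' A4'')\<^sup>2 + (dist A1'' T12)\<^sup>2 * (sin \<phi>)\<^sup>2)
     = (dist A4'' (midpoint A3 A4) - dist A4'' T34) / (dist A3 A4 / 2 * tan (\<theta> / 2))"
proof -
  define g where "g = \<kappa> / dist A3 A4"
  have pos: "0 < dist A3 A4" "0 < r A3 + r A4"
    using distinct_vertices r_pos by auto
  then have "g \<noteq> 0"
    using kappa_pos by (simp add: g_def)
  have "dist A4'' T34 - dist A1'' T12 * cos \<phi> = \<kappa> * (r A3 - r A4) * (1 + cos \<theta>) / dist A3 A4"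
    using simpson_direction_inner(1) unfolding simpson_frame(1) .
  also have "\<dots> = ((r A3 - r A4) * (1 + cos \<theta>)) * g"
    by (simp add: g_def)
  finally have "(dist A4'' T34 - dist A1'' T12 * cos \<phi>)
       / sqrt ((dist A1'' A4'')\<^sup>2 + (dist A1'' T12)\<^sup>2 * (sin \<phi>)\<^sup>2)
     = ((r A3 - r A4) * (1 + cos \<theta>)) * g / (((r A3 + r A4) * sin \<theta>) * g)"
    by (simp add: simpson_transverse g_def)
  also have "\<dots> = (r A3 - r A4) / (r A3 + r A4) * cot (\<theta> / 2)"
    using \<open>g \<noteq> 0\<close> by (simp add: cot_half times_divide_times_eq)
  also have "\<dots> = (dist A4'' (midpoint A3 A4) - dist A4'' T34) / (dist A3 A4 / 2 * tan (\<theta> / 2))"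
  proof -
    have m: "dist A4'' (midpoint A3 A4) - dist A4'' T34
        = dist A3 A4 / 2 * ((r A3 - r A4) / (r A3 + r A4))"
      using pos by (simp add: dist_midpoint34 dist_T34 field_simps)
    have half: "dist A3 A4 / 2 \<noteq> 0"
      using pos by simp
    show ?thesis
      unfolding m mult_divide_mult_cancel_left[OF half] cot_altdef by (simp only: divide_inverse)
  qed
  finally show ?thesis .
qed

lemma simpson_sine_relation:
  "(dist A4'' T34 - dist A4'' A4) * sqrt ((dist A1'' A4'')\<^sup>2 + (dist A1'' T12)\<^sup>2 * (sin \<phi>)\<^sup>2)
     = \<kappa> * r A4 * sin \<theta>"
proof -
  have "r A3 + r A4 \<noteq> 0" "dist A3 A4 \<noteq> 0"
    using distinct_vertices r_pos by auto
  then show ?thesis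
    unfolding dist_T34 simpson_transverse by (simp add: divide_simps)
qed

end

(* The mirror instances of the lemmas above are available only in a new context. *)
context fermat_simpson_line
begin

lemma mirror_bisector_side_formula:
  "(dist A1'' T12 - dist A4'' T34 * cos \<phi>)
       / sqrt ((dist A1'' A4'')\<^sup>2 + (dist A4'' T34)\<^sup>2 * (sin \<phi>)\<^sup>2)
     = (dist A1'' (midpoint A1 A2) - dist A1'' T12) / (dist A1 A2 / 2 * tan (\<theta> / 2))"
  using mirror.bisector_side_formula
  by (simp add: vec_angle_commute[of "A3 - A4"] dist_commute[of A4'' A1''] dist_commute[of A2 A1]
      midpoint_sym[of A2 A1] opposite_angle_eq)

lemma cot_half_angle_formula:
  "cot (\<theta> / 2)
     = ((dist A1'' A4'')\<^sup>2 + dist A1'' A1 * (dist A1'' T12 - dist A4'' T34 * cos \<phi>)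
         + dist A4'' A4 * (dist A4'' T34 - dist A1'' T12 * cos \<phi>))
       / ((dist A1'' T12 - dist A1'' A1) * sqrt ((dist A1'' A4'')\<^sup>2 + (dist A4'' T34)\<^sup>2 * (sin \<phi>)\<^sup>2)
          + (dist A4'' T34 - dist A4'' A4) * sqrt ((dist A1'' A4'')\<^sup>2 + (dist A1'' T12)\<^sup>2 * (sin \<phi>)\<^sup>2))"
proof -
  have mirror_sine: "(dist A1'' T12 - dist A1'' A1)
        * sqrt ((dist A1'' A4'')\<^sup>2 + (dist A4'' T34)\<^sup>2 * (sin \<phi>)\<^sup>2) = \<kappa> * r A1 * sin \<theta>"
    using mirror.simpson_sine_relation
    by (simp add: vec_angle_commute[of "A3 - A4"] dist_commute[of A4'' A1''] mirror_kappa
        opposite_angle_eq)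
  have K: "\<kappa> * (r A1 + r A4) \<noteq> 0"
    using kappa_pos r_pos by simp
  have num: "(dist A1'' A4'')\<^sup>2 + dist A1'' A1 * (dist A1'' T12 - dist A4'' T34 * cos \<phi>)
         + dist A4'' A4 * (dist A4'' T34 - dist A1'' T12 * cos \<phi>)
      = \<kappa> * (r A1 + r A4) * (1 + cos \<theta>)"
    using simpson_direction_inner(3) unfolding simpson_frame(3) .
  have den: "(dist A1'' T12 - dist A1'' A1) * sqrt ((dist A1'' A4'')\<^sup>2 + (dist A4'' T34)\<^sup>2 * (sin \<phi>)\<^sup>2)
          + (dist A4'' T34 - dist A4'' A4) * sqrt ((dist A1'' A4'')\<^sup>2 + (dist A1'' T12)\<^sup>2 * (sin \<phi>)\<^sup>2)
      = \<kappa> * (r A1 + r A4) * sin \<theta>"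
    unfolding mirror_sine simpson_sine_relation by (simp add: algebra_simps)
  show ?thesis
    unfolding num den cot_half mult_divide_mult_cancel_left[OF K] ..
qed

end

theorem theorem5:
  fixes A1 A2 A3 A4 F T12 T34 A1'' A4'' :: "real^3"
  assumes nondeg: "\<not> coplanar {A1, A2, A3, A4}"
    and ineq: "dist A1 A4 + dist A2 A3 > dist A1 A2 + dist A3 A4"
    and Fmin: "\<forall>X. dist A1 F + dist A2 F + dist A3 F + dist A4 F
                   \<le> dist A1 X + dist A2 X + dist A3 X + dist A4 X"
    and Fint: "F \<in> interior (convex hull {A1, A2, A3, A4})"
    and T12: "T12 \<in> affine hull {A1, A2}"
    and T34: "T34 \<in> affine hull {A3, A4}"
    and FT: "collinear {F, T12, T34}"
    and A1'': "A1'' \<in> affine hull {A1, A2}"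
    and A4'': "A4'' \<in> affine hull {A3, A4}"
    and perp1: "inner (A4'' - A1'') (A2 - A1) = 0"
    and perp2: "inner (A4'' - A1'') (A3 - A4) = 0"
    and pos1: "A1'' \<notin> closed_segment A1 A2" "A1 \<in> closed_segment A1'' A2"
    and pos4: "A4'' \<notin> closed_segment A4 A3" "A4 \<in> closed_segment A4'' A3"
  defines "H \<equiv> dist A1'' A4''"
    and "\<phi> \<equiv> vec_angle (A2 - A1) (A3 - A4)"
    and "a12 \<equiv> dist A1 A2"
    and "a34 \<equiv> dist A3 A4"
    and "t12 \<equiv> dist A1'' T12"
    and "t34 \<equiv> dist A4'' T34"
    and "k1 \<equiv> dist A1'' A1"
    and "k2 \<equiv> dist A4'' A4"
    and "m12 \<equiv> dist A1'' (midpoint A1 A2)"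
    and "m34 \<equiv> dist A4'' (midpoint A3 A4)"
    and "\<theta> \<equiv> pt_angle A4 F A3"
  shows "((t34 - t12 * cos \<phi>) / sqrt (H\<^sup>2 + t12\<^sup>2 * (sin \<phi>)\<^sup>2)
           = (m34 - t34) / (a34 / 2 * tan (\<theta> / 2)))
       \<and> ((t12 - t34 * cos \<phi>) / sqrt (H\<^sup>2 + t34\<^sup>2 * (sin \<phi>)\<^sup>2)
           = (m12 - t12) / (a12 / 2 * tan (\<theta> / 2)))
       \<and> cot (\<theta> / 2)
           = (H\<^sup>2 + k1 * (t12 - t34 * cos \<phi>) + k2 * (t34 - t12 * cos \<phi>))
             / ((t12 - k1) * sqrt (H\<^sup>2 + t34\<^sup>2 * (sin \<phi>)\<^sup>2)
                + (t34 - k2) * sqrt (H\<^sup>2 + t12\<^sup>2 * (sin \<phi>)\<^sup>2))"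
proof -
  interpret fermat_simpson_line A1 A2 A3 A4 F T12 T34 A1'' A4''
    using nondeg Fmin Fint T12 T34 FT perp1 perp2 pos1(2) pos4(2) by unfold_locales
  show ?thesis
    unfolding H_def \<phi>_def a12_def a34_def t12_def t34_def k1_def k2_def m12_def m34_def \<theta>_def
    using bisector_side_formula mirror_bisector_side_formula cot_half_angle_formula by blast
qed

end
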